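(* Let $r>2.2$ be real and let $p,q$ be primes with $p>q^2$. Then $\sigma_{-r}(qp)<\sigma_{-r}(q^2)$.
   Context: For $n\in\mathbb{N}$ and real $r$, $\sigma_{-r}(n)=\sum_{d\mid n}d^{-r}$. *)

theory Defs
  imports Complex_Main "HOL-Computational_Algebra.Primes"
begin

definition sigma_neg :: "real \<Rightarrow> nat \<Rightarrow> real" where
  "sigma_neg r n = (\<Sum>d\<in>{d. d dvd n}. real d powr (- r))"

end

theory Submission
  imports Defs
begin

text \<open>Both sums contain 1 and q^-r, so it suffices that p^-r (1 + q^-r) < q^-2r, i.e.
  1 + q^-r < (p / q^2)^r. Since p / q^2 >= 1 + q^-2 > 1 and r > 1, the right-hand side
  exceeds 1 + q^-2, which is at least 1 + q^-r as soon as r >= 2. So the hypothesis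
  r > 2.2 is only used in the weaker form r >= 2.\<close>

lemma divisors_prime_power_nat:
  fixes p k :: nat
  assumes "prime p"
  shows "{d. d dvd p ^ k} = (\<lambda>i. p ^ i) ` {..k}"
  using divides_primepow_nat[OF assms] by (auto simp: le_imp_power_dvd)

lemma divisors_prime_mult_nat:
  fixes p q :: nat
  assumes "prime p" "prime q"
  shows "{d. d dvd p * q} = {1, p, q, p * q}"
proof (intro equalityI subsetI)
  fix d assume "d \<in> {d. d dvd p * q}"
  then obtain a b where "d = a * b" "a dvd p" "b dvd q"
    using division_decomp by blast
  moreover have "a = 1 \<or> a = p" "b = 1 \<or> b = q"
    using \<open>a dvd p\<close> \<open>b dvd q\<close> assms by (auto simp: prime_nat_iff)
  ultimately show "d \<in> {1, p, q, p * q}"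
    by auto
qed auto

lemma sigma_neg_prime_power:
  fixes p k :: nat
  assumes "prime p"
  shows "sigma_neg r (p ^ k) = (\<Sum>i\<le>k. (real p ^ i) powr (- r))"
proof -
  have "inj_on (\<lambda>i. p ^ i) {..k}"
    using prime_gt_1_nat[OF assms] by (auto intro: inj_onI simp: power_inject_exp)
  then show ?thesis
    unfolding sigma_neg_def divisors_prime_power_nat[OF assms]
    by (simp add: sum.reindex)
qed

lemma sigma_neg_prime_mult:
  fixes p q :: nat
  assumes "prime p" "prime q" "p \<noteq> q"
  shows "sigma_neg r (p * q) =
    1 + real p powr (- r) + real q powr (- r) + (real p * real q) powr (- r)"
proof -
  have "p \<ge> 2" "q \<ge> 2"
    using assms by (auto simp: prime_ge_2_nat)
  then have "p * q \<noteq> p" "p * q \<noteq> q" "p * q \<noteq> 1" "p \<noteq> 1" "q \<noteq> 1"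
    by auto
  with assms(3) show ?thesis
    unfolding sigma_neg_def divisors_prime_mult_nat[OF assms(1,2)]
    by (simp add: algebra_simps)
qed

lemma powr_neg_add_mult_lt:
  fixes P Q r :: real
  assumes Q: "Q \<ge> 1" and P: "P \<ge> Q\<^sup>2 + 1" and r: "r \<ge> 2"
  shows "P powr (- r) + (Q * P) powr (- r) < (Q\<^sup>2) powr (- r)"
proof -
  have "Q > 0" "P > 0"
    using Q P zero_le_power2[of Q] by linarith+
  have "1 + Q powr (- r) \<le> 1 + Q powr (- 2)"
    using Q r by (simp add: powr_mono)
  also have "\<dots> = 1 + 1 / Q\<^sup>2"
    using \<open>Q > 0\<close> by (simp add: powr_minus_divide)
  also have "\<dots> = (Q\<^sup>2 + 1) / Q\<^sup>2"
    using \<open>Q > 0\<close> by (simp add: field_simps)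
  also have "\<dots> \<le> P / Q\<^sup>2"
    using P by (simp add: divide_right_mono)
  also have "\<dots> < (P / Q\<^sup>2) powr r"
  proof -
    have "1 < P / Q\<^sup>2"
      using P \<open>Q > 0\<close> by (simp add: field_simps)
    then have "(P / Q\<^sup>2) powr 1 < (P / Q\<^sup>2) powr r"
      using r by (intro powr_less_mono) auto
    then show ?thesis
      using \<open>P > 0\<close> by simp
  qed
  finally have "P powr (- r) * (1 + Q powr (- r)) < P powr (- r) * (P / Q\<^sup>2) powr r"
    using \<open>P > 0\<close> by simp
  moreover have "P powr (- r) * (1 + Q powr (- r)) = P powr (- r) + (Q * P) powr (- r)"
    by (simp add: powr_mult algebra_simps)
  moreover have "P powr (- r) * (P / Q\<^sup>2) powr r = (Q\<^sup>2) powr (- r)"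
    using \<open>P > 0\<close> by (simp add: powr_divide powr_minus field_simps)
  ultimately show ?thesis
    by simp
qed

theorem mainTheorem7:
  fixes r :: real and p q :: nat
  assumes "r > 2.2" and "prime p" and "prime q" and "p > q^2"
  shows "sigma_neg r (q * p) < sigma_neg r (q^2)"
proof -
  have "q \<ge> 1"
    using prime_gt_0_nat[OF assms(3)] by simp
  then have "q \<le> q\<^sup>2"
    by (simp add: power2_eq_square)
  then have "p \<noteq> q"
    using assms(4) by simp
  have "real p \<ge> (real q)\<^sup>2 + 1"
    using assms(4) by (metis Suc_leI add.commute of_nat_Suc of_nat_le_iff of_nat_power)
  then have "real p powr (- r) + (real q * real p) powr (- r) < (real q ^ 2) powr (- r)"
    using \<open>q \<ge> 1\<close> assms(1) by (intro powr_neg_add_mult_lt) auto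
  moreover have "sigma_neg r (q\<^sup>2) = 1 + real q powr (- r) + (real q ^ 2) powr (- r)"
    using sigma_neg_prime_power[OF assms(3), of r 2] by (simp add: numeral_2_eq_2)
  ultimately show ?thesis
    using sigma_neg_prime_mult[OF assms(3,2)] \<open>p \<noteq> q\<close> by simp
qed

end
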